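(* Suppose the e-values are valid ($\mathbb{E}[e_t\mid\mathcal{F}_{t-1}]\le1$ a.s. whenever $\theta_t=0$), and that the null e-values $\{e_j:\theta_j=0\}$ are mutually independent and independent of the non-null e-values $\{e_j:\theta_j=1\}$, each null e-value satisfying $\mathbb{E}[e_j]\le 1$. Suppose the testing levels are of the form $\alpha_t=f_t(\delta_1,\dots,\delta_{t-1})$ for deterministic functions $f_t:\{0,1\}^{t-1}\to[0,\infty)$ that are coordinatewise nondecreasing. Let $$\mathrm{FDP}^*_{\mathrm{e\text{-}ind}}(t)=\frac{\sum_{j\in\mathcal{H}_0(t)}\alpha_j}{R_t\vee1}.$$ Then for every $t\ge1$: if $\mathbb{E}[\mathrm{FDP}^*_{\mathrm{e\text{-}ind}}(t)]\le\alpha$, then $\mathrm{FDR}(t)\le\alpha$.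
   Context: Let $\alpha\in(0,1)$ be a target level. Hypotheses are indexed by $t=1,2,\dots$; $\theta_t\in\{0,1\}$ is a fixed (non-random) indicator with $\theta_t=0$ iff the $t$-th null hypothesis is true. $e_1,e_2,\dots$ are nonnegative random variables (e-values). Testing levels $\alpha_1,\alpha_2,\dots$ are nonnegative random variables and the decisions are $\delta_t=\mathbb{1}\{e_t\ge 1/\alpha_t\}$ (with $\delta_t=0$ when $\alpha_t=0$). Let $\mathcal{F}_t=\sigma(\delta_1,\dots,\delta_t)$, $\mathcal{F}_0$ trivial. $R_t=\sum_{j=1}^t\delta_j$, $R_0=0$. $\mathcal{H}_0(t)=\{j\le t:\theta_j=0\}$. $\mathrm{FDR}(t)=\mathbb{E}\big[\sum_{j\in\mathcal{H}_0(t)}\delta_j/(R_t\vee 1)\big]$. *)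

theory Defs
  imports "HOL-Probability.Probability"
begin

text \<open>Hypotheses are indexed by t = 1,2,...\<close>

fun decs :: "(nat \<Rightarrow> bool list \<Rightarrow> real) \<Rightarrow> (nat \<Rightarrow> real) \<Rightarrow> nat \<Rightarrow> bool list" where
  "decs f xv 0 = []"
| "decs f xv (Suc n) =
     decs f xv n @ [0 < f (Suc n) (decs f xv n) \<and> xv (Suc n) \<ge> 1 / f (Suc n) (decs f xv n)]"

definition lvl :: "(nat \<Rightarrow> bool list \<Rightarrow> real) \<Rightarrow> (nat \<Rightarrow> real) \<Rightarrow> nat \<Rightarrow> real" where
  "lvl f xv t = f t (decs f xv (t - 1))"

definition dlt :: "(nat \<Rightarrow> bool list \<Rightarrow> real) \<Rightarrow> (nat \<Rightarrow> real) \<Rightarrow> nat \<Rightarrow> real" where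
  "dlt f xv t = (if decs f xv t ! (t - 1) then 1 else 0)"

definition rej :: "(nat \<Rightarrow> bool list \<Rightarrow> real) \<Rightarrow> (nat \<Rightarrow> real) \<Rightarrow> nat \<Rightarrow> real" where
  "rej f xv t = (\<Sum>j\<in>{1..t}. dlt f xv j)"

definition nulls :: "(nat \<Rightarrow> nat) \<Rightarrow> nat \<Rightarrow> nat set" where
  "nulls \<theta> t = {j \<in> {1..t}. \<theta> j = 0}"

definition filt :: "'a measure \<Rightarrow> (nat \<Rightarrow> bool list \<Rightarrow> real) \<Rightarrow> (nat \<Rightarrow> 'a \<Rightarrow> real) \<Rightarrow> nat \<Rightarrow> 'a measure" where
  "filt M f e n = vimage_algebra (space M) (\<lambda>\<omega>. decs f (\<lambda>j. e j \<omega>) n) (count_space UNIV)"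

definition FDR :: "'a measure \<Rightarrow> (nat \<Rightarrow> nat) \<Rightarrow> (nat \<Rightarrow> bool list \<Rightarrow> real) \<Rightarrow> (nat \<Rightarrow> 'a \<Rightarrow> real) \<Rightarrow> nat \<Rightarrow> real" where
  "FDR M \<theta> f e t = (\<integral>\<omega>. (\<Sum>j\<in>nulls \<theta> t. dlt f (\<lambda>i. e i \<omega>) j) / max (rej f (\<lambda>i. e i \<omega>) t) 1 \<partial>M)"

definition FDPstar :: "(nat \<Rightarrow> nat) \<Rightarrow> (nat \<Rightarrow> bool list \<Rightarrow> real) \<Rightarrow> (nat \<Rightarrow> real) \<Rightarrow> nat \<Rightarrow> real" where
  "FDPstar \<theta> f xv t = (\<Sum>j\<in>nulls \<theta> t. lvl f xv j) / max (rej f xv t) 1"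

end

theory Submission
  imports Defs
begin

(* For a null index j we have delta_j <= alpha_j e_j. Let H(x) be alpha_j / (R_t v 1)
   recomputed with e_j replaced by x. Since alpha_j does not look at e_j and the levels
   are monotone, raising e_j can only add rejections, so H is nonincreasing and
   delta_j / (R_t v 1) <= e_j H(e_j). With m = E e_j <= 1 we get
   (e_j - m)(H(e_j) - H(m)) <= 0, and H(m) is a function of the other e-values, hence
   independent of e_j; taking expectations yields E[e_j H(e_j)] <= m E[H(e_j)] <= E[H(e_j)].
   Summing over the nulls gives FDR(t) <= E[FDP*(t)]. The conditional validity of the
   e-values is not needed, only their unconditional means and the independence. *)

lemma length_decs [simp]: "length (decs f xv n) = n"
  by (induction n) auto

lemma decs_cong: "(\<And>i. 1 \<le> i \<Longrightarrow> i \<le> n \<Longrightarrow> xv i = xv' i) \<Longrightarrow> decs f xv n = decs f xv' n"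
  by (induction n) auto

lemma dlt_Suc:
  "dlt f xv (Suc n) =
    (if 0 < f (Suc n) (decs f xv n) \<and> 1 / f (Suc n) (decs f xv n) \<le> xv (Suc n) then 1 else 0)"
  by (simp add: dlt_def nth_append)

lemma lvl_Suc: "lvl f xv (Suc n) = f (Suc n) (decs f xv n)"
  by (simp add: lvl_def)

lemma lvl_fun_upd_self: "lvl f (xv(j := x)) j = lvl f xv j"
  unfolding lvl_def by (subst decs_cong[where xv' = xv]) auto

lemma abs_lvl_le: "\<bar>lvl f xv j\<bar> \<le> Max ((\<lambda>xs. \<bar>f j xs\<bar>) ` {xs. length xs = j - 1})"
proof -
  have "finite {xs :: bool list. length xs = j - 1}"
    using finite_lists_length_eq[of "UNIV :: bool set"] by simp
  then show ?thesis
    unfolding lvl_def by (intro Max_ge) auto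
qed

lemma dlt_le_lvl_mult:
  assumes "1 \<le> j" "0 \<le> lvl f xv j" "0 \<le> xv j"
  shows "dlt f xv j \<le> lvl f xv j * xv j"
proof -
  obtain n where j: "j = Suc n" using assms(1) by (cases j) auto
  show ?thesis
    using assms(2,3) unfolding j dlt_Suc lvl_Suc by (auto simp: divide_le_eq mult.commute)
qed

lemma decs_mono:
  assumes f_mono: "\<And>s xs ys. 1 \<le> s \<Longrightarrow> length xs = s - 1 \<Longrightarrow> length ys = s - 1 \<Longrightarrow>
        list_all2 (\<le>) xs ys \<Longrightarrow> f s xs \<le> f s ys"
    and le: "\<And>i. xv i \<le> xv' i"
  shows "list_all2 (\<le>) (decs f xv n) (decs f xv' n)"
proof (induction n)
  case (Suc n)
  let ?a = "f (Suc n) (decs f xv n)" and ?a' = "f (Suc n) (decs f xv' n)"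
  have "?a \<le> ?a'"
    using f_mono[of "Suc n", OF _ _ _ Suc.IH] by simp
  then have "(0 < ?a \<and> 1 / ?a \<le> xv (Suc n)) \<le> (0 < ?a' \<and> 1 / ?a' \<le> xv' (Suc n))"
    using le[of "Suc n"] frac_le[of 1 1 ?a ?a'] by (auto simp: le_bool_def)
  then show ?case using Suc.IH by (simp add: list_all2_appendI)
qed simp

lemma rej_mono:
  assumes f_mono: "\<And>s xs ys. 1 \<le> s \<Longrightarrow> length xs = s - 1 \<Longrightarrow> length ys = s - 1 \<Longrightarrow>
        list_all2 (\<le>) xs ys \<Longrightarrow> f s xs \<le> f s ys"
    and le: "\<And>i. xv i \<le> xv' i"
  shows "rej f xv t \<le> rej f xv' t"
  unfolding rej_def
proof (rule sum_mono)
  fix j assume "j \<in> {1..t}"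
  then have "decs f xv j ! (j - 1) \<le> decs f xv' j ! (j - 1)"
    using list_all2_nthD[OF decs_mono[OF f_mono le]] by simp
  then show "dlt f xv j \<le> dlt f xv' j"
    by (auto simp: dlt_def le_bool_def)
qed

lemma measurable_decs:
  assumes "\<And>i. 1 \<le> i \<Longrightarrow> (\<lambda>\<omega>. X \<omega> i) \<in> borel_measurable N"
  shows "(\<lambda>\<omega>. decs f (X \<omega>) n) \<in> measurable N (count_space UNIV)"
proof (induction n)
  case (Suc n)
  have "(\<lambda>\<omega>. l @ [0 < f (Suc n) l \<and> 1 / f (Suc n) l \<le> X \<omega> (Suc n)])
      \<in> measurable N (count_space UNIV)" for l
    using assms[of "Suc n"] by measurable
  then show ?case
    unfolding decs.simps by (rule measurable_compose_countable[OF _ Suc])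
qed simp

lemma borel_measurable_dlt:
  assumes "\<And>i. 1 \<le> i \<Longrightarrow> (\<lambda>\<omega>. X \<omega> i) \<in> borel_measurable N"
  shows "(\<lambda>\<omega>. dlt f (X \<omega>) j) \<in> borel_measurable N"
  unfolding dlt_def using measurable_decs[OF assms] by measurable

lemma borel_measurable_lvl:
  assumes "\<And>i. 1 \<le> i \<Longrightarrow> (\<lambda>\<omega>. X \<omega> i) \<in> borel_measurable N"
  shows "(\<lambda>\<omega>. lvl f (X \<omega>) j) \<in> borel_measurable N"
  unfolding lvl_def using measurable_decs[OF assms] by measurable

lemma borel_measurable_rej:
  assumes "\<And>i. 1 \<le> i \<Longrightarrow> (\<lambda>\<omega>. X \<omega> i) \<in> borel_measurable N"
  shows "(\<lambda>\<omega>. rej f (X \<omega>) t) \<in> borel_measurable N"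
  unfolding rej_def using borel_measurable_dlt[OF assms] by measurable

lemma (in prob_space) indep_sets_insert:
  assumes indep: "indep_sets F I" and "k \<notin> I"
    and indep_G: "indep_set (sigma_sets (space M) (\<Union>i\<in>I. F i)) G"
  shows "indep_sets (F(k := G)) (insert k I)"
proof (rule indep_setsI)
  fix i assume "i \<in> insert k I"
  then show "(F(k := G)) i \<subseteq> events"
    using indep indep_setD_ev2[OF indep_G] by (auto simp: indep_sets_def)
next
  fix A J assume J: "J \<noteq> {}" "J \<subseteq> insert k I" "finite J"
    and A: "\<forall>j\<in>J. A j \<in> (F(k := G)) j"
  show "prob (\<Inter>j\<in>J. A j) = (\<Prod>j\<in>J. prob (A j))"
  proof (cases "k \<in> J")
    case False
    then have "J \<subseteq> I" "\<forall>j\<in>J. A j \<in> F j"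
      using J A by (metis fun_upd_other insert_absorb subset_insert)+
    then show ?thesis
      using indep_setsD[OF indep] J by blast
  next
    case True
    define J' where "J' = J - {k}"
    have J': "J' \<subseteq> I" "finite J'" and Ak: "A k \<in> G"
      using J A True \<open>k \<notin> I\<close> by (auto simp: J'_def)
    have AJ': "\<forall>j\<in>J'. A j \<in> F j"
      using A unfolding J'_def by (metis DiffE fun_upd_other singletonI)
    show ?thesis
    proof (cases "J' = {}")
      case True
      then have "J = {k}" using \<open>k \<in> J\<close> by (auto simp: J'_def)
      then show ?thesis by simp
    next
      case False
      have "(\<Inter>j\<in>J'. A j) \<in> sigma_sets (space M) (\<Union>i\<in>I. F i)"
      proof -
        interpret S: sigma_algebra "space M" "sigma_sets (space M) (\<Union>i\<in>I. F i)"
          using indep by (intro sigma_algebra_sigma_sets) (auto simp: indep_sets_def dest: sets.sets_into_space)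
        show ?thesis
          using False J' AJ' by (intro S.finite_INT) auto
      qed
      moreover have "(\<Inter>j\<in>J. A j) = (\<Inter>j\<in>J'. A j) \<inter> A k"
        using \<open>k \<in> J\<close> by (auto simp: J'_def)
      ultimately have "prob (\<Inter>j\<in>J. A j) = prob (\<Inter>j\<in>J'. A j) * prob (A k)"
        using indep_setD[OF indep_G _ Ak] by simp
      also have "\<dots> = (\<Prod>j\<in>J. prob (A j))"
        using indep_setsD[OF indep J'(1) False J'(2) AJ'] prod.remove[OF J(3) True, of "\<lambda>j. prob (A j)"]
        by (simp add: J'_def mult.commute)
      finally show ?thesis .
    qed
  qed
qed

lemma Int_stable_vimages: "Int_stable {X -` A \<inter> S | A. A \<in> sets N}"
  unfolding Int_stable_def
proof safe
  fix A B assume "A \<in> sets N" "B \<in> sets N"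
  then show "\<exists>C. (X -` A \<inter> S) \<inter> (X -` B \<inter> S) = X -` C \<inter> S \<and> C \<in> sets N"
    by (intro exI[of _ "A \<inter> B"]) auto
qed

lemma (in prob_space) indep_set_sigma_component_rest:
  assumes indep: "indep_sets F I" and stable: "\<And>i. i \<in> I \<Longrightarrow> Int_stable (F i)" and "j \<in> I"
  shows "indep_set (sigma_sets (space M) (F j)) (sigma_sets (space M) (\<Union>i\<in>I - {j}. F i))"
proof -
  let ?K = "\<lambda>b. if b then {j} else I - {j}"
  have "(\<Union>b. ?K b) = I"
    using \<open>j \<in> I\<close> by (auto simp: UNIV_bool)
  have "indep_sets (\<lambda>b. sigma_sets (space M) (\<Union>i\<in>?K b. F i)) UNIV"
  proof (rule indep_sets_collect_sigma)
    show "indep_sets F (\<Union>b. ?K b)"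
      using indep \<open>(\<Union>b. ?K b) = I\<close> by simp
    show "Int_stable (F i)" if "i \<in> ?K b" for i b
      using stable that \<open>j \<in> I\<close> by (auto split: if_splits)
  qed (auto simp: disjoint_family_on_def)
  then show ?thesis
    unfolding indep_set_def by (rule indep_sets_mono_sets) (auto split: bool.split)
qed

lemma vimage_in_restrict_vimages:
  fixes X :: "'i \<Rightarrow> 'a \<Rightarrow> 'b::topological_space"
  assumes "i \<in> K" "A \<in> sets borel"
  shows "X i -` A \<inter> S \<in> {(\<lambda>\<omega>. \<lambda>i\<in>K. X i \<omega>) -` B \<inter> S | B. B \<in> sets (PiM K (\<lambda>_. borel))}"
proof -
  have "X i -` A \<inter> S = (\<lambda>\<omega>. \<lambda>i\<in>K. X i \<omega>) -` ((\<lambda>v. v i) -` A \<inter> space (PiM K (\<lambda>_. borel))) \<inter> S"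
    using assms(1) by (auto simp: space_PiM)
  then show ?thesis
    using measurable_sets[OF measurable_component_singleton[OF assms(1)] assms(2)] by blast
qed

lemma (in prob_space) indep_var_measurable_sigma:
  assumes indep: "indep_set (sigma_sets (space M) {X -` A \<inter> space M | A. A \<in> sets MX}) (sigma_sets (space M) G)"
    and "G \<subseteq> Pow (space M)" "random_variable MX X" "random_variable MZ Z"
    and Z_meas: "Z \<in> measurable (sigma (space M) G) MZ"
  shows "indep_var MX X MZ Z"
proof -
  have "sigma_sets (space M) {Z -` A \<inter> space M | A. A \<in> sets MZ} \<subseteq> sigma_sets (space M) G"
    using measurable_sets[OF Z_meas] \<open>G \<subseteq> Pow (space M)\<close> by (intro sigma_sets_mono) auto
  then have "indep_set (sigma_sets (space M) {X -` A \<inter> space M | A. A \<in> sets MX})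
      (sigma_sets (space M) {Z -` A \<inter> space M | A. A \<in> sets MZ})"
    using indep \<open>G \<subseteq> Pow (space M)\<close> unfolding indep_set_def
    by (elim indep_sets_mono_sets) (auto split: bool.split)
  then show ?thesis
    unfolding indep_var_eq using assms(3,4) by blast
qed

lemma (in prob_space) indep_var_measurable_others:
  fixes e :: "nat \<Rightarrow> 'a \<Rightarrow> real"
  assumes indep: "indep_vars (\<lambda>_. borel) e N"
    and indep_blocks: "indep_var
      (PiM N (\<lambda>_. borel)) (\<lambda>\<omega>. \<lambda>i\<in>N. e i \<omega>) (PiM P (\<lambda>_. borel)) (\<lambda>\<omega>. \<lambda>i\<in>P. e i \<omega>)"
    and "0 \<notin> N" "j \<in> N"
    and Z: "\<And>S. (\<And>i. i \<in> N \<union> P - {j} \<Longrightarrow> e i \<in> borel_measurable S) \<Longrightarrow> Z \<in> borel_measurable S"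
  shows "indep_var borel (e j) borel Z"
proof -
  define F where "F i = {e i -` A \<inter> space M | A. A \<in> sets borel}" for i
  define G where "G = {(\<lambda>\<omega>. \<lambda>i\<in>P. e i \<omega>) -` B \<inter> space M | B. B \<in> sets (PiM P (\<lambda>_. borel))}"
  have "indep_set (sigma_sets (space M)
      {(\<lambda>\<omega>. \<lambda>i\<in>N. e i \<omega>) -` B \<inter> space M | B. B \<in> sets (PiM N (\<lambda>_. borel))}) (sigma_sets (space M) G)"
    using indep_blocks unfolding indep_var_eq G_def by blast
  moreover have "F i \<subseteq> {(\<lambda>\<omega>. \<lambda>i\<in>N. e i \<omega>) -` B \<inter> space M | B. B \<in> sets (PiM N (\<lambda>_. borel))}"
    if "i \<in> N" for i
    unfolding F_def using vimage_in_restrict_vimages[OF that] by blast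
  ultimately have "indep_set (sigma_sets (space M) (\<Union>i\<in>N. F i)) G"
    unfolding indep_set_def
    by (elim indep_sets_mono_sets) (auto split: bool.split intro!: sigma_sets_subseteq)
  moreover have "indep_sets F N"
    using indep unfolding indep_vars_def2 F_def by auto
  \<comment> \<open>the free index 0 carries the whole non-null block\<close>
  ultimately have "indep_sets (F(0 := G)) (insert 0 N)"
    using \<open>0 \<notin> N\<close> by (intro indep_sets_insert)
  then have "indep_set (sigma_sets (space M) ((F(0 := G)) j))
      (sigma_sets (space M) (\<Union>i\<in>insert 0 N - {j}. (F(0 := G)) i))"
    by (rule indep_set_sigma_component_rest)
      (use \<open>j \<in> N\<close> in \<open>auto simp: F_def G_def Int_stable_vimages\<close>)
  moreover define rest where "rest = (\<Union>i\<in>insert 0 N - {j}. (F(0 := G)) i)"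
  moreover have "j \<noteq> 0"
    using \<open>j \<in> N\<close> \<open>0 \<notin> N\<close> by metis
  ultimately have indep_j: "indep_set (sigma_sets (space M) (F j)) (sigma_sets (space M) rest)"
    by simp
  have rest_space: "rest \<subseteq> Pow (space M)"
    by (auto simp: rest_def F_def G_def)
  have "e i \<in> borel_measurable (sigma (space M) rest)" if "i \<in> N \<union> P - {j}" for i
  proof (rule measurableI)
    fix A :: "real set" assume A: "A \<in> sets borel"
    have "e i -` A \<inter> space M \<in> rest"
    proof (cases "i \<in> N")
      case True
      then have "i \<noteq> 0" "i \<in> insert 0 N - {j}"
        using that \<open>0 \<notin> N\<close> by (metis, blast)
      then show ?thesis
        using A by (auto simp: rest_def F_def)
    next
      case False
      then have "e i -` A \<inter> space M \<in> G"
        using that A unfolding G_def by (intro vimage_in_restrict_vimages) auto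
      then show ?thesis
        using \<open>j \<noteq> 0\<close> by (auto simp: rest_def)
    qed
    then show "e i -` A \<inter> space (sigma (space M) rest) \<in> sets (sigma (space M) rest)"
      using rest_space by auto
  qed simp
  then have "Z \<in> borel_measurable (sigma (space M) rest)"
    by (rule Z)
  moreover have "e i \<in> borel_measurable M" if "i \<in> N" for i
    using indep that by (auto simp: indep_vars_def2)
  moreover have "e i \<in> borel_measurable M" if "i \<in> P" for i
    using measurable_compose[OF indep_var_rv2[OF indep_blocks] measurable_component_singleton[OF that]]
      that by simp
  ultimately show ?thesis
    using indep_j rest_space Z[of M] \<open>j \<in> N\<close>
    by (intro indep_var_measurable_sigma[where G = rest]) (auto simp: F_def)
qed

lemma integrable_mult_bounded:
  fixes X Y :: "'a \<Rightarrow> real"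
  assumes "integrable M X" "Y \<in> borel_measurable M" "\<And>\<omega>. \<omega> \<in> space M \<Longrightarrow> \<bar>Y \<omega>\<bar> \<le> C"
  shows "integrable M (\<lambda>\<omega>. X \<omega> * Y \<omega>)"
proof (rule Bochner_Integration.integrable_bound)
  show "integrable M (\<lambda>\<omega>. C * X \<omega>)"
    using assms(1) by simp
  show "AE \<omega> in M. norm (X \<omega> * Y \<omega>) \<le> norm (C * X \<omega>)"
  proof (rule AE_I2)
    fix \<omega> assume "\<omega> \<in> space M"
    then have "\<bar>Y \<omega>\<bar> \<le> \<bar>C\<bar>"
      using assms(3) by force
    then show "norm (X \<omega> * Y \<omega>) \<le> norm (C * X \<omega>)"
      by (simp add: abs_mult mult.commute[of "\<bar>C\<bar>"] mult_left_mono)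
  qed
qed (use assms in measurable)

lemma (in prob_space) expectation_mult_antitone_le:
  fixes X :: "'a \<Rightarrow> real" and H :: "real \<Rightarrow> 'a \<Rightarrow> real"
  assumes X: "integrable M X" "expectation X \<le> 1"
    and HX_meas: "(\<lambda>\<omega>. H (X \<omega>) \<omega>) \<in> borel_measurable M"
    and H_nonneg: "\<And>x \<omega>. 0 \<le> H x \<omega>" and H_le: "\<And>x \<omega>. H x \<omega> \<le> C"
    and H_antitone: "\<And>x y \<omega>. x \<le> y \<Longrightarrow> H y \<omega> \<le> H x \<omega>"
    and indep: "indep_var borel X borel (H (expectation X))"
  shows "expectation (\<lambda>\<omega>. X \<omega> * H (X \<omega>) \<omega>) \<le> expectation (\<lambda>\<omega>. H (X \<omega>) \<omega>)"
proof -
  define m where "m = expectation X"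
  have Hm_meas: "H m \<in> borel_measurable M"
    using indep_var_rv2[OF indep] by (simp add: m_def)
  have int_HX: "integrable M (\<lambda>\<omega>. H (X \<omega>) \<omega>)"
    using HX_meas H_nonneg H_le by (intro integrable_const_bound[where B = C]) auto
  have int_Hm: "integrable M (H m)"
    using Hm_meas H_nonneg H_le by (intro integrable_const_bound[where B = C]) auto
  have int_XHX: "integrable M (\<lambda>\<omega>. X \<omega> * H (X \<omega>) \<omega>)"
    using H_nonneg H_le by (intro integrable_mult_bounded[OF X(1) HX_meas, of C]) (simp add: abs_le_iff)
  have int_XHm: "integrable M (\<lambda>\<omega>. X \<omega> * H m \<omega>)"
    using indep_var_integrable[OF indep X(1)] int_Hm by (simp add: m_def)
  have pointwise: "X \<omega> * H (X \<omega>) \<omega> \<le> m * H (X \<omega>) \<omega> + X \<omega> * H m \<omega> - m * H m \<omega>" for \<omega>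
  proof -
    have "(X \<omega> - m) * (H (X \<omega>) \<omega> - H m \<omega>) \<le> 0"
      using H_antitone[of "X \<omega>" m \<omega>] H_antitone[of m "X \<omega>" \<omega>]
      by (cases "X \<omega> \<le> m") (auto simp: mult_nonpos_nonneg mult_nonneg_nonpos)
    then show ?thesis
      by (simp add: algebra_simps)
  qed
  have "expectation (\<lambda>\<omega>. X \<omega> * H (X \<omega>) \<omega>)
      \<le> expectation (\<lambda>\<omega>. m * H (X \<omega>) \<omega> + X \<omega> * H m \<omega> - m * H m \<omega>)"
    using pointwise int_XHX int_HX int_XHm int_Hm by (intro integral_mono) auto
  also have "\<dots> = m * expectation (\<lambda>\<omega>. H (X \<omega>) \<omega>) + expectation (\<lambda>\<omega>. X \<omega> * H m \<omega>)
      - m * expectation (H m)"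
    using int_HX int_XHm int_Hm by simp
  also have "expectation (\<lambda>\<omega>. X \<omega> * H m \<omega>) = m * expectation (H m)"
    using indep_var_lebesgue_integral[OF indep X(1)] int_Hm by (simp add: m_def)
  also have "m * expectation (\<lambda>\<omega>. H (X \<omega>) \<omega>) + m * expectation (H m) - m * expectation (H m)
      \<le> expectation (\<lambda>\<omega>. H (X \<omega>) \<omega>)"
  proof -
    have "0 \<le> expectation (\<lambda>\<omega>. H (X \<omega>) \<omega>)"
      using H_nonneg by (simp add: Bochner_Integration.integral_nonneg)
    then show ?thesis
      using mult_right_mono[OF X(2)] by (simp add: m_def)
  qed
  finally show ?thesis .
qed

lemma abs_div_max_one_le: "\<bar>x / max r 1\<bar> \<le> \<bar>x :: real\<bar>"
proof -
  have "\<bar>x\<bar> / max r 1 \<le> \<bar>x\<bar> / 1"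
    by (intro divide_left_mono) auto
  then show ?thesis
    by (simp add: abs_div)
qed

lemma (in prob_space) integrable_div_max_rej:
  assumes "\<And>i. e i \<in> borel_measurable M" "g \<in> borel_measurable M" "\<And>\<omega>. \<bar>g \<omega>\<bar> \<le> B"
  shows "integrable M (\<lambda>\<omega>. g \<omega> / max (rej f (\<lambda>i. e i \<omega>) t) 1)"
proof (rule integrable_const_bound[where B = B])
  show "AE \<omega> in M. norm (g \<omega> / max (rej f (\<lambda>i. e i \<omega>) t) 1) \<le> B"
    unfolding real_norm_def using assms(3) by (intro AE_I2 order_trans[OF abs_div_max_one_le])
  show "(\<lambda>\<omega>. g \<omega> / max (rej f (\<lambda>i. e i \<omega>) t) 1) \<in> borel_measurable M"
    using assms(2) borel_measurable_rej[of "\<lambda>\<omega> i. e i \<omega>", OF assms(1)] by measurable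
qed

lemma (in prob_space) integrable_dlt_div_max_rej:
  assumes "\<And>i. e i \<in> borel_measurable M"
  shows "integrable M (\<lambda>\<omega>. dlt f (\<lambda>i. e i \<omega>) j / max (rej f (\<lambda>i. e i \<omega>) t) 1)"
  using assms borel_measurable_dlt[of "\<lambda>\<omega> i. e i \<omega>"]
  by (intro integrable_div_max_rej[where B = 1]) (auto simp: dlt_def)

lemma (in prob_space) integrable_lvl_div_max_rej:
  assumes "\<And>i. e i \<in> borel_measurable M"
  shows "integrable M (\<lambda>\<omega>. lvl f (\<lambda>i. e i \<omega>) j / max (rej f (\<lambda>i. e i \<omega>) t) 1)"
  using assms borel_measurable_lvl[of "\<lambda>\<omega> i. e i \<omega>"]
  by (intro integrable_div_max_rej[OF _ _ abs_lvl_le]) auto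

lemma (in prob_space) expectation_dlt_div_le_lvl_div:
  fixes e :: "nat \<Rightarrow> 'a \<Rightarrow> real"
  assumes e_meas: "\<And>i. e i \<in> borel_measurable M"
    and e_nonneg: "\<And>\<omega>. \<omega> \<in> space M \<Longrightarrow> 0 \<le> e j \<omega>"
    and e_integrable: "integrable M (e j)" and e_mean: "expectation (e j) \<le> 1"
    and "1 \<le> j"
    and f_nonneg: "\<And>xs. length xs = j - 1 \<Longrightarrow> 0 \<le> f j xs"
    and f_mono: "\<And>s xs ys. 1 \<le> s \<Longrightarrow> length xs = s - 1 \<Longrightarrow> length ys = s - 1 \<Longrightarrow>
        list_all2 (\<le>) xs ys \<Longrightarrow> f s xs \<le> f s ys"
    and indep: "\<And>x. indep_var borel (e j) borel
      (\<lambda>\<omega>. lvl f ((\<lambda>i. e i \<omega>)(j := x)) j / max (rej f ((\<lambda>i. e i \<omega>)(j := x)) t) 1)"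
  shows "expectation (\<lambda>\<omega>. dlt f (\<lambda>i. e i \<omega>) j / max (rej f (\<lambda>i. e i \<omega>) t) 1)
    \<le> expectation (\<lambda>\<omega>. lvl f (\<lambda>i. e i \<omega>) j / max (rej f (\<lambda>i. e i \<omega>) t) 1)"
proof -
  define H where "H x \<omega> = lvl f ((\<lambda>i. e i \<omega>)(j := x)) j / max (rej f ((\<lambda>i. e i \<omega>)(j := x)) t) 1"
    for x \<omega>
  define C where "C = Max ((\<lambda>xs. \<bar>f j xs\<bar>) ` {xs. length xs = j - 1})"
  have lvl_nonneg: "0 \<le> lvl f xv j" for xv
    unfolding lvl_def by (rule f_nonneg) simp
  have H_e: "H (e j \<omega>) \<omega> = lvl f (\<lambda>i. e i \<omega>) j / max (rej f (\<lambda>i. e i \<omega>) t) 1" for \<omega>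
  proof -
    have "(\<lambda>i. e i \<omega>)(j := e j \<omega>) = (\<lambda>i. e i \<omega>)"
      by (rule fun_upd_triv)
    then show ?thesis
      by (simp add: H_def)
  qed
  have H_nonneg: "0 \<le> H x \<omega>" for x \<omega>
    unfolding H_def using lvl_nonneg by simp
  have H_le: "H x \<omega> \<le> C" for x \<omega>
    unfolding H_def C_def
    by (rule order_trans[OF abs_ge_self order_trans[OF abs_div_max_one_le abs_lvl_le]])
  have H_antitone: "H y \<omega> \<le> H x \<omega>" if "x \<le> y" for x y \<omega>
  proof -
    have "rej f ((\<lambda>i. e i \<omega>)(j := x)) t \<le> rej f ((\<lambda>i. e i \<omega>)(j := y)) t"
      using that by (intro rej_mono[OF f_mono]) auto
    then show ?thesis
      unfolding H_def lvl_fun_upd_self using lvl_nonneg by (intro divide_left_mono) auto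
  qed
  have H_e_meas: "(\<lambda>\<omega>. H (e j \<omega>) \<omega>) \<in> borel_measurable M"
    unfolding H_e using borel_measurable_lvl[of "\<lambda>\<omega> i. e i \<omega>"] borel_measurable_rej[of "\<lambda>\<omega> i. e i \<omega>"] e_meas
    by measurable
  have "expectation (\<lambda>\<omega>. dlt f (\<lambda>i. e i \<omega>) j / max (rej f (\<lambda>i. e i \<omega>) t) 1)
      \<le> expectation (\<lambda>\<omega>. e j \<omega> * H (e j \<omega>) \<omega>)"
  proof (rule integral_mono)
    show "integrable M (\<lambda>\<omega>. dlt f (\<lambda>i. e i \<omega>) j / max (rej f (\<lambda>i. e i \<omega>) t) 1)"
      using e_meas by (rule integrable_dlt_div_max_rej)
    show "integrable M (\<lambda>\<omega>. e j \<omega> * H (e j \<omega>) \<omega>)"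
      using H_nonneg H_le by (intro integrable_mult_bounded[OF e_integrable H_e_meas, of C]) (simp add: abs_le_iff)
    fix \<omega> assume "\<omega> \<in> space M"
    then have "dlt f (\<lambda>i. e i \<omega>) j \<le> lvl f (\<lambda>i. e i \<omega>) j * e j \<omega>"
      using \<open>1 \<le> j\<close> lvl_nonneg e_nonneg by (intro dlt_le_lvl_mult) auto
    then show "dlt f (\<lambda>i. e i \<omega>) j / max (rej f (\<lambda>i. e i \<omega>) t) 1 \<le> e j \<omega> * H (e j \<omega>) \<omega>"
      unfolding H_e by (auto simp: mult.commute intro: divide_right_mono)
  qed
  also have "\<dots> \<le> expectation (\<lambda>\<omega>. H (e j \<omega>) \<omega>)"
  proof (rule expectation_mult_antitone_le[where H = H, OF e_integrable e_mean H_e_meas H_nonneg H_le H_antitone])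
    show "indep_var borel (e j) borel (H (expectation (e j)))"
      using indep unfolding H_def[abs_def] by simp
  qed
  finally show ?thesis
    unfolding H_e .
qed

lemma (in prob_space) indep_var_null_level_ratio:
  fixes e :: "nat \<Rightarrow> 'a \<Rightarrow> real" and \<theta> :: "nat \<Rightarrow> nat"
  assumes theta01: "\<And>j. \<theta> j \<in> {0, 1}"
    and null_indep: "indep_vars (\<lambda>_. borel) e {j. 1 \<le> j \<and> \<theta> j = 0}"
    and null_nonnull_indep: "indep_var
        (PiM {j. 1 \<le> j \<and> \<theta> j = 0} (\<lambda>_. borel)) (\<lambda>\<omega>. \<lambda>j\<in>{j. 1 \<le> j \<and> \<theta> j = 0}. e j \<omega>)
        (PiM {j. 1 \<le> j \<and> \<theta> j = 1} (\<lambda>_. borel)) (\<lambda>\<omega>. \<lambda>j\<in>{j. 1 \<le> j \<and> \<theta> j = 1}. e j \<omega>)"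
    and "1 \<le> j" "\<theta> j = 0"
  shows "indep_var borel (e j) borel
    (\<lambda>\<omega>. lvl f ((\<lambda>i. e i \<omega>)(j := x)) j / max (rej f ((\<lambda>i. e i \<omega>)(j := x)) t) 1)"
proof (rule indep_var_measurable_others[OF null_indep null_nonnull_indep])
  fix S
  assume e_S: "\<And>i. i \<in> {j. 1 \<le> j \<and> \<theta> j = 0} \<union> {j. 1 \<le> j \<and> \<theta> j = 1} - {j} \<Longrightarrow>
    e i \<in> borel_measurable S"
  have "(\<lambda>\<omega>. ((\<lambda>i. e i \<omega>)(j := x)) i) \<in> borel_measurable S" if "1 \<le> i" for i
    using e_S[of i] theta01[of i] that by (cases "i = j") auto
  then show "(\<lambda>\<omega>. lvl f ((\<lambda>i. e i \<omega>)(j := x)) j / max (rej f ((\<lambda>i. e i \<omega>)(j := x)) t) 1)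
      \<in> borel_measurable S"
    using borel_measurable_lvl borel_measurable_rej by measurable
qed (use assms in auto)

theorem theorem5:
  fixes M :: "'a measure" and e :: "nat \<Rightarrow> 'a \<Rightarrow> real" and \<theta> :: "nat \<Rightarrow> nat"
    and f :: "nat \<Rightarrow> bool list \<Rightarrow> real" and alpha :: real and t :: nat
  assumes "prob_space M"
    and "0 < alpha" "alpha < 1"
    and theta01: "\<And>j. \<theta> j \<in> {0, 1}"
    and e_meas: "\<And>j. e j \<in> borel_measurable M"
    and e_nonneg: "\<And>j \<omega>. \<omega> \<in> space M \<Longrightarrow> 0 \<le> e j \<omega>"
    and valid: "\<And>j. 1 \<le> j \<Longrightarrow> \<theta> j = 0 \<Longrightarrow>
        AE \<omega> in M. real_cond_exp M (filt M f e (j - 1)) (e j) \<omega> \<le> 1"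
    and null_integrable: "\<And>j. 1 \<le> j \<Longrightarrow> \<theta> j = 0 \<Longrightarrow> integrable M (e j)"
    and null_mean: "\<And>j. 1 \<le> j \<Longrightarrow> \<theta> j = 0 \<Longrightarrow> (\<integral>\<omega>. e j \<omega> \<partial>M) \<le> 1"
    and null_indep: "prob_space.indep_vars M (\<lambda>_. borel) e {j. 1 \<le> j \<and> \<theta> j = 0}"
    and null_nonnull_indep: "prob_space.indep_var M
        (PiM {j. 1 \<le> j \<and> \<theta> j = 0} (\<lambda>_. borel)) (\<lambda>\<omega>. \<lambda>j\<in>{j. 1 \<le> j \<and> \<theta> j = 0}. e j \<omega>)
        (PiM {j. 1 \<le> j \<and> \<theta> j = 1} (\<lambda>_. borel)) (\<lambda>\<omega>. \<lambda>j\<in>{j. 1 \<le> j \<and> \<theta> j = 1}. e j \<omega>)"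
    and f_nonneg: "\<And>s xs. 1 \<le> s \<Longrightarrow> length xs = s - 1 \<Longrightarrow> 0 \<le> f s xs"
    and f_mono: "\<And>s xs ys. 1 \<le> s \<Longrightarrow> length xs = s - 1 \<Longrightarrow> length ys = s - 1 \<Longrightarrow>
        list_all2 (\<le>) xs ys \<Longrightarrow> f s xs \<le> f s ys"
    and "1 \<le> t"
    and hyp: "(\<integral>\<omega>. FDPstar \<theta> f (\<lambda>j. e j \<omega>) t \<partial>M) \<le> alpha"
  shows "FDR M \<theta> f e t \<le> alpha"
proof -
  interpret prob_space M by fact
  let ?ratio = "\<lambda>g \<omega>. g (\<lambda>i. e i \<omega>) / max (rej f (\<lambda>i. e i \<omega>) t) 1"
  have integrable: "integrable M (?ratio (\<lambda>xv. dlt f xv j))" "integrable M (?ratio (\<lambda>xv. lvl f xv j))" for j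
    using e_meas by (rule integrable_dlt_div_max_rej, rule integrable_lvl_div_max_rej)
  have "FDR M \<theta> f e t = (\<Sum>j\<in>nulls \<theta> t. expectation (?ratio (\<lambda>xv. dlt f xv j)))"
    unfolding FDR_def sum_divide_distrib using integrable by (intro Bochner_Integration.integral_sum) auto
  also have "\<dots> \<le> (\<Sum>j\<in>nulls \<theta> t. expectation (?ratio (\<lambda>xv. lvl f xv j)))"
  proof (rule sum_mono)
    fix j assume "j \<in> nulls \<theta> t"
    then have "1 \<le> j" "\<theta> j = 0"
      by (auto simp: nulls_def)
    then show "expectation (?ratio (\<lambda>xv. dlt f xv j)) \<le> expectation (?ratio (\<lambda>xv. lvl f xv j))"
      using e_meas e_nonneg null_integrable null_mean f_nonneg f_mono
        indep_var_null_level_ratio[OF theta01 null_indep null_nonnull_indep]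
      by (intro expectation_dlt_div_le_lvl_div) auto
  qed
  also have "\<dots> = expectation (\<lambda>\<omega>. FDPstar \<theta> f (\<lambda>j. e j \<omega>) t)"
    unfolding FDPstar_def sum_divide_distrib using integrable
    by (intro Bochner_Integration.integral_sum[symmetric]) auto
  finally show ?thesis
    using hyp by linarith
qed

end
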